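(* For a natural number $j$ and real $X\ge1$, let $N_j^*(X)$ be the number of tuples $(d_1,\dots,d_j)$ of natural numbers $d_k\ge1$ with $\prod_{k=1}^j(3d_k)\le X$. Let $j\ge2$. Then $N_j^*(X)=0$ for $X<3^j$, and for $X\ge 3^j$, $$N_j^*(X)\le \frac{1}{(j-1)!}\,\frac13\Big(\frac23\Big)^{j-1}X\,\Big(\log\Big(\frac13\Big(\frac23\Big)^{j-1}X\Big)\Big)^{j-1}.$$ *)

theory Defs
  imports Complex_Main
begin

definition Nstar :: "nat \<Rightarrow> real \<Rightarrow> nat" where
  "Nstar j X = card {ds :: nat list. length ds = j \<and> (\<forall>d\<in>set ds. d \<ge> 1)
                       \<and> real (\<Prod>d\<leftarrow>ds. 3 * d) \<le> X}"

end

theory Submission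
  imports Defs
begin

text \<open>Since \<open>\<Prod>k. 3 d\<^sub>k = 3\<^sup>j \<Prod>k. d\<^sub>k\<close>, \<open>N\<^sub>j\<^sup>*(X)\<close> counts the \<open>j\<close>-tuples of positive integers
  with product at most \<open>Y = X / 3\<^sup>j\<close>, and there are none if \<open>Y < 1\<close>. Splitting off the first
  entry \<open>d\<close> bounds the number \<open>D k Y\<close> of such \<open>k\<close>-tuples by \<open>D (k+1) Y \<le> (\<Sum>d \<le> Y. D k (Y/d))\<close>,
  and induction on \<open>k\<close> gives \<open>D (k+1) Y \<le> Y (ln Y + k)\<^sup>k / k!\<close>. In the induction step the sum
  over \<open>d\<close> is compared with \<open>\<integral>\<^sub>1\<^sup>Y (ln (Y/t) + k)\<^sup>k / t dt\<close> without integrating: for \<open>d \<ge> 2\<close> the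
  summand is at most the decrease of \<open>(ln (Y/t) + k)\<^sup>k\<^sup>+\<^sup>1 / (k+1)\<close> from \<open>t = d - 1\<close> to \<open>t = d\<close>,
  so the sum telescopes. Finally \<open>ln 2 \<ge> 1/2\<close> gives \<open>ln Y + k \<le> 2 ln (2\<^sup>k Y)\<close>.\<close>

lemma one_le_prod_list:
  fixes xs :: "'a::linordered_semidom list"
  shows "(\<forall>x\<in>set xs. 1 \<le> x) \<Longrightarrow> 1 \<le> prod_list xs"
proof (induction xs)
  case (Cons a xs)
  then show ?case
    using mult_mono[of 1 a 1 "prod_list xs"] order.trans[OF zero_le_one, of a] by simp
qed simp

lemma prod_list_map_const_mult:
  fixes xs :: "'a::comm_monoid_mult list"
  shows "(\<Prod>x\<leftarrow>xs. c * x) = c ^ length xs * prod_list xs"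
  by (induction xs) (simp_all add: ac_simps)

lemma power_diff_ge:
  fixes a b :: "'a::linordered_idom"
  assumes "0 \<le> b" "b \<le> a"
  shows "of_nat (Suc n) * b ^ n * (a - b) \<le> a ^ Suc n - b ^ Suc n"
proof -
  have "of_nat (Suc n) * b ^ n = (\<Sum>p<Suc n. b ^ p * b ^ (n - p))"
    by (simp flip: power_add)
  also have "\<dots> \<le> (\<Sum>p<Suc n. a ^ p * b ^ (n - p))"
    using assms by (intro sum_mono mult_right_mono power_mono) auto
  finally have "of_nat (Suc n) * b ^ n * (a - b) \<le> (a - b) * (\<Sum>p<Suc n. a ^ p * b ^ (n - p))"
    using assms by (metis diff_ge_0_iff_ge mult.commute mult_right_mono)
  then show ?thesis
    by (simp only: diff_power_eq_sum)
qed

definition bounded_prod_tuples :: "nat \<Rightarrow> real \<Rightarrow> nat list set" where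
  "bounded_prod_tuples k Y = {ds. length ds = k \<and> (\<forall>d\<in>set ds. d \<ge> 1) \<and> real (prod_list ds) \<le> Y}"

lemma bounded_prod_tuples_empty:
  assumes "Y < 1"
  shows "bounded_prod_tuples k Y = {}"
  using assms one_le_prod_list[where 'a = nat]
  unfolding bounded_prod_tuples_def by (fastforce simp flip: of_nat_le_iff)

lemma bounded_prod_tuples_Suc_subset:
  "bounded_prod_tuples (Suc k) Y \<subseteq>
     (\<lambda>(d, ds). d # ds) ` (SIGMA d:{1..nat \<lfloor>Y\<rfloor>}. bounded_prod_tuples k (Y / d))"
proof
  fix ds assume "ds \<in> bounded_prod_tuples (Suc k) Y"
  then obtain d ds' where ds: "ds = d # ds'" and "length ds' = k" and d: "1 \<le> d"
    and ds': "\<forall>x\<in>set ds'. 1 \<le> x" and prod: "real d * real (prod_list ds') \<le> Y"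
    unfolding bounded_prod_tuples_def by (cases ds) auto
  have "1 \<le> real (prod_list ds')"
    using one_le_prod_list[OF ds'] by simp
  then have "real d \<le> Y"
    using mult_left_mono[of 1 "real (prod_list ds')" "real d"] prod by simp
  then have "d \<le> nat \<lfloor>Y\<rfloor>"
    by (simp add: le_nat_floor)
  moreover have "real (prod_list ds') \<le> Y / d"
    using prod d by (simp add: field_simps)
  ultimately have "(d, ds') \<in> (SIGMA d:{1..nat \<lfloor>Y\<rfloor>}. bounded_prod_tuples k (Y / d))"
    using d ds' \<open>length ds' = k\<close> unfolding bounded_prod_tuples_def by auto
  then show "ds \<in> (\<lambda>(d, ds). d # ds) ` (SIGMA d:{1..nat \<lfloor>Y\<rfloor>}. bounded_prod_tuples k (Y / d))"
    unfolding ds by (rule rev_image_eqI) simp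
qed

lemma finite_bounded_prod_tuples: "finite (bounded_prod_tuples k Y)"
proof (induction k arbitrary: Y)
  case 0
  have "bounded_prod_tuples 0 Y \<subseteq> {[]}"
    unfolding bounded_prod_tuples_def by auto
  then show ?case
    using finite_subset by blast
next
  case (Suc k)
  have "finite ((\<lambda>(d, ds). d # ds) ` (SIGMA d:{1..nat \<lfloor>Y\<rfloor>}. bounded_prod_tuples k (Y / d)))"
    by (intro finite_imageI finite_SigmaI finite_atLeastAtMost Suc.IH)
  then show ?case
    using bounded_prod_tuples_Suc_subset by (rule finite_subset[rotated])
qed

lemma card_bounded_prod_tuples_0_le: "card (bounded_prod_tuples 0 Y) \<le> 1"
proof -
  have "bounded_prod_tuples 0 Y \<subseteq> {[]}"
    unfolding bounded_prod_tuples_def by auto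
  then show ?thesis
    using card_mono[of "{[]}"] by simp
qed

lemma card_bounded_prod_tuples_Suc_le:
  "card (bounded_prod_tuples (Suc k) Y) \<le> (\<Sum>d=1..nat \<lfloor>Y\<rfloor>. card (bounded_prod_tuples k (Y / d)))"
proof -
  let ?T = "SIGMA d:{1..nat \<lfloor>Y\<rfloor>}. bounded_prod_tuples k (Y / d)"
  have fin: "finite ?T"
    using finite_bounded_prod_tuples by blast
  have "card (bounded_prod_tuples (Suc k) Y) \<le> card ((\<lambda>(d, ds). d # ds) ` ?T)"
    using fin by (intro card_mono finite_imageI bounded_prod_tuples_Suc_subset)
  also have "\<dots> \<le> card ?T"
    by (rule card_image_le[OF fin])
  also have "\<dots> = (\<Sum>d=1..nat \<lfloor>Y\<rfloor>. card (bounded_prod_tuples k (Y / d)))"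
    using finite_bounded_prod_tuples by simp
  finally show ?thesis .
qed

lemma ln_quotient_power_div_le_diff:
  fixes Y d :: real and k :: nat
  assumes "2 \<le> d" "d \<le> Y"
  shows "(ln (Y / d) + k) ^ k / d \<le>
    ((ln (Y / (d - 1)) + k) ^ Suc k - (ln (Y / d) + k) ^ Suc k) / Suc k"
proof -
  define a where "a = ln (Y / (d - 1)) + k"
  define b where "b = ln (Y / d) + k"
  have "0 \<le> b"
    unfolding b_def using assms by simp
  have "1 / d \<le> - ln (1 - 1 / d)"
    using ln_one_minus_pos_upper_bound[of "1 / d"] assms by simp
  also have "\<dots> = a - b"
    unfolding a_def b_def using assms by (simp add: ln_div field_simps)
  finally have "1 / d \<le> a - b" .
  then have "b \<le> a"
    using assms by (smt (verit) divide_pos_pos)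
  have "Suc k * b ^ k * (1 / d) \<le> Suc k * b ^ k * (a - b)"
    using \<open>0 \<le> b\<close> \<open>1 / d \<le> a - b\<close> by (intro mult_left_mono) auto
  also have "\<dots> \<le> a ^ Suc k - b ^ Suc k"
    using power_diff_ge[OF \<open>0 \<le> b\<close> \<open>b \<le> a\<close>, of k] by simp
  finally show ?thesis
    unfolding a_def[symmetric] b_def[symmetric] by (simp add: field_simps)
qed

lemma sum_ln_quotient_power_div_le:
  fixes Y :: real and k n :: nat
  assumes "1 \<le> n" "n \<le> Y"
  shows "(\<Sum>d=1..n. (ln (Y / d) + k) ^ k / d) \<le>
    (ln Y + k) ^ k + ((ln Y + k) ^ Suc k - (ln (Y / n) + k) ^ Suc k) / Suc k"
  using assms
proof (induction n rule: nat_induct_at_least)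
  case base
  then show ?case by simp
next
  case (Suc n)
  have "(ln (Y / Suc n) + k) ^ k / Suc n \<le>
      ((ln (Y / n) + k) ^ Suc k - (ln (Y / Suc n) + k) ^ Suc k) / Suc k"
    using ln_quotient_power_div_le_diff[of "Suc n" Y k] Suc by simp
  then show ?case
    using Suc by (simp add: diff_divide_distrib)
qed

lemma card_bounded_prod_tuples_le:
  assumes "1 \<le> Y"
  shows "real (card (bounded_prod_tuples (Suc k) Y)) \<le> Y * (ln Y + k) ^ k / fact k"
  using assms
proof (induction k arbitrary: Y)
  case 0
  have "card (bounded_prod_tuples 1 Y) \<le> (\<Sum>d=1..nat \<lfloor>Y\<rfloor>. card (bounded_prod_tuples 0 (Y / d)))"
    using card_bounded_prod_tuples_Suc_le[of 0 Y] by simp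
  also have "\<dots> \<le> (\<Sum>d=1..nat \<lfloor>Y\<rfloor>. 1)"
    by (intro sum_mono card_bounded_prod_tuples_0_le)
  finally have "real (card (bounded_prod_tuples 1 Y)) \<le> real (nat \<lfloor>Y\<rfloor>)"
    by simp
  also have "\<dots> \<le> Y"
    using 0 by (intro of_nat_floor) simp
  finally show ?case
    by simp
next
  case (Suc k)
  define n where "n = nat \<lfloor>Y\<rfloor>"
  define L where "L = ln Y + k"
  have "1 \<le> n" "n \<le> Y"
    unfolding n_def using Suc.prems by (simp_all add: le_nat_floor of_nat_floor)
  have "0 \<le> L"
    unfolding L_def using Suc.prems by simp
  have "real (card (bounded_prod_tuples (Suc (Suc k)) Y)) \<le>
      (\<Sum>d=1..n. real (card (bounded_prod_tuples (Suc k) (Y / d))))"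
    unfolding n_def of_nat_sum[symmetric] of_nat_le_iff by (rule card_bounded_prod_tuples_Suc_le)
  also have "\<dots> \<le> (\<Sum>d=1..n. (Y / d) * (ln (Y / d) + k) ^ k / fact k)"
  proof (intro sum_mono Suc.IH)
    fix d assume "d \<in> {1..n}"
    then show "1 \<le> Y / d"
      using \<open>n \<le> Y\<close> by simp
  qed
  also have "\<dots> = Y / fact k * (\<Sum>d=1..n. (ln (Y / d) + k) ^ k / d)"
    by (simp add: sum_distrib_left mult.commute)
  also have "\<dots> \<le> Y / fact k * (L ^ k + L ^ Suc k / Suc k)"
  proof -
    have "0 \<le> (ln (Y / n) + k) ^ Suc k / Suc k"
      using \<open>1 \<le> n\<close> \<open>n \<le> Y\<close> by simp
    then show ?thesis
      using sum_ln_quotient_power_div_le[OF \<open>1 \<le> n\<close> \<open>n \<le> Y\<close>, of k] Suc.prems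
      unfolding L_def diff_divide_distrib by (intro mult_left_mono) (linarith, simp)
  qed
  also have "\<dots> = Y / fact (Suc k) * (Suc k * L ^ k + L ^ Suc k)"
    by (simp add: field_simps)
  also have "\<dots> \<le> Y / fact (Suc k) * (L + 1) ^ Suc k"
    using power_diff_ge[of L "L + 1" k] \<open>0 \<le> L\<close> Suc.prems by (intro mult_left_mono) auto
  also have "\<dots> = Y * (ln Y + Suc k) ^ Suc k / fact (Suc k)"
    unfolding L_def by (simp add: ac_simps)
  finally show ?case .
qed

lemma Nstar_eq_card_bounded_prod_tuples: "Nstar j X = card (bounded_prod_tuples j (X / 3 ^ j))"
proof -
  have "{ds. length ds = j \<and> (\<forall>d\<in>set ds. d \<ge> 1) \<and> real (\<Prod>d\<leftarrow>ds. 3 * d) \<le> X} =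
      bounded_prod_tuples j (X / 3 ^ j)"
    unfolding bounded_prod_tuples_def prod_list_map_const_mult by (auto simp: field_simps)
  then show ?thesis
    unfolding Nstar_def by simp
qed

lemma Nstar_eq_0: "X < 3 ^ j \<Longrightarrow> Nstar j X = 0"
  unfolding Nstar_eq_card_bounded_prod_tuples by (simp add: bounded_prod_tuples_empty)

lemma Nstar_Suc_le:
  assumes "3 ^ Suc k \<le> X"
  shows "real (Nstar (Suc k) X) \<le>
    1 / fact k * (1/3) * (2/3) ^ k * X * (ln ((1/3) * (2/3) ^ k * X)) ^ k"
proof -
  define Y where "Y = X / 3 ^ Suc k"
  have "1 \<le> Y"
    unfolding Y_def using assms by simp
  have "1 / 2 \<le> ln (2 :: real)"
    using ln_one_minus_pos_upper_bound[of "1 / 2"] by (simp add: ln_div)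
  then have "k / 2 \<le> k * ln (2 :: real)"
    using mult_left_mono[of "1 / 2" "ln 2" "real k"] by simp
  moreover have "ln (2 ^ k * Y) = k * ln 2 + ln Y"
    using \<open>1 \<le> Y\<close> by (simp add: ln_mult ln_realpow)
  moreover have "0 \<le> ln Y"
    using \<open>1 \<le> Y\<close> by simp
  ultimately have "ln Y + k \<le> 2 * ln (2 ^ k * Y)"
    by linarith
  then have "(ln Y + k) ^ k \<le> (2 * ln (2 ^ k * Y)) ^ k"
    using \<open>1 \<le> Y\<close> by (intro power_mono) auto
  have "real (Nstar (Suc k) X) \<le> Y * (ln Y + k) ^ k / fact k"
    unfolding Nstar_eq_card_bounded_prod_tuples Y_def[symmetric]
    by (rule card_bounded_prod_tuples_le[OF \<open>1 \<le> Y\<close>])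
  also have "\<dots> \<le> Y * (2 * ln (2 ^ k * Y)) ^ k / fact k"
    using \<open>(ln Y + k) ^ k \<le> _\<close> \<open>1 \<le> Y\<close> by (intro divide_right_mono mult_left_mono) auto
  also have "\<dots> = 1 / fact k * (2 ^ k * Y) * (ln (2 ^ k * Y)) ^ k"
    by (simp add: power_mult_distrib)
  also have "2 ^ k * Y = (1/3) * (2/3) ^ k * X"
    unfolding Y_def by (simp add: field_simps power_divide)
  finally show ?thesis
    by simp
qed

theorem lemma2:
  fixes j :: nat and X :: real
  assumes "j \<ge> 2" and "X \<ge> 1"
  shows "(X < 3 ^ j \<longrightarrow> Nstar j X = 0) \<and>
         (X \<ge> 3 ^ j \<longrightarrow>
            real (Nstar j X) \<le> 1 / fact (j - 1) * (1/3) * (2/3) ^ (j - 1) * X *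
              (ln ((1/3) * (2/3) ^ (j - 1) * X)) ^ (j - 1))"
proof -
  \<comment> \<open>only \<open>j \<ge> 1\<close> is needed, and \<open>X \<ge> 1\<close> not at all\<close>
  obtain k where "j = Suc k"
    using assms(1) by (cases j) auto
  then show ?thesis
    using Nstar_eq_0 Nstar_Suc_le by auto
qed

end
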